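(* Let $M$ be a monoid and let $\chi=(r_0,T,\alpha,\theta)$ be an elliptic $M$-tree. Define $D_\chi:M\times M\to\overline{\mathbb N}$ by $D_\chi(m,m')=|\alpha m\wedge\alpha m'|$. Then: (i) $D_\chi$ is a length function for $M$; (ii) if $\mathrm{dep}(r_0,T)=l\in\mathbb N$, then the function $d(m,m')=2l-2D_\chi(m,m')$ satisfies $d(m,m')=d_T(\alpha_l m,\alpha_l m')$; (iii) if $\mathrm{dep}(r_0,T)=l\in\mathbb N$ and $\chi$ is strongly faithful, then $d$ is an ultrametric (in particular $d(m,m')=0$ implies $m=m'$).
   Context: $\overline{\mathbb N}=\mathbb N\cup\{\omega\}$. Rooted tree $(r_0,T)$: tree with root $r_0$, $\mathrm{dep}(v)=d_T(r_0,v)$, $\mathrm{dep}(r_0,T)=\sup_v\mathrm{dep}(v)$. A ray is either a geodesic $(\alpha_l,\dots,\alpha_1,\alpha_0=r_0)$ (length $|\alpha|=l$) or an infinite path $(\dots,\alpha_1,\alpha_0=r_0)$ with $\mathrm{dep}(\alpha_i)=i$ (length $\omega$); $\alpha\le\beta$ if $|\alpha|\le|\beta|$ and $\alpha_i=\beta_i$ for all $i\le|\alpha|$; maximal rays are maximal for $\le$; $(r_0,T)$ is uniform if all maximal rays have the same length. $\alpha\wedge\beta$ is the longest common initial segment of $\alpha$ and $\beta$ (equal to $\alpha$ if $\alpha=\beta$). Elliptic contractions are depth-preserving, distance-non-increasing maps of vertices; $\mathrm{Ell}(r_0,T)$ is their monoid. An elliptic action is a monoid homomorphism $\theta:M\to\mathrm{Ell}(r_0,T)$,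 written $v\mapsto vm$, extended to rays by $\alpha m=(\dots,\alpha_1m,\alpha_0m)$. An elliptic $M$-tree is $\chi=(r_0,T,\alpha,\theta)$ with $(r_0,T)$ uniform, $\alpha$ a maximal ray and $\theta$ an elliptic action that is $\alpha$-transitive: $\mathrm{Vert}(T)=\bigcup_i\alpha_iM$. It is strongly faithful if $\alpha m=\alpha m'$ implies $m=m'$. A length function for $M$ is $D:M\times M\to\overline{\mathbb N}$ with (L1) $D(m,m')=D(m',m)$; (L2) $D(m',m'')\le D(m,m)$; (L3) $D(m',m'')\le D(m'm,m''m)$; (L4) $D(m,m'')\ge\min\{D(m,m'),D(m',m'')\}$, for all $m,m',m''$. *)

theory Defs
  imports Main "HOL-Library.Extended_Nat"
begin

definition walk :: "'v set \<Rightarrow> ('v \<times> 'v) set \<Rightarrow> 'v list \<Rightarrow> 'v \<Rightarrow> 'v \<Rightarrow> bool" where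
  "walk V E xs u v \<longleftrightarrow> xs \<noteq> [] \<and> hd xs = u \<and> last xs = v \<and> set xs \<subseteq> V \<and>
     (\<forall>i. Suc i < length xs \<longrightarrow> (xs ! i, xs ! Suc i) \<in> E)"

definition gpath :: "'v set \<Rightarrow> ('v \<times> 'v) set \<Rightarrow> 'v list \<Rightarrow> 'v \<Rightarrow> 'v \<Rightarrow> bool" where
  "gpath V E xs u v \<longleftrightarrow> walk V E xs u v \<and> distinct xs"

definition tree :: "'v set \<Rightarrow> ('v \<times> 'v) set \<Rightarrow> bool" where
  "tree V E \<longleftrightarrow> V \<noteq> {} \<and> E \<subseteq> V \<times> V \<and> sym E \<and> (\<forall>v. (v, v) \<notin> E) \<and>
     (\<forall>u\<in>V. \<forall>v\<in>V. \<exists>!xs. gpath V E xs u v)"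

definition tdist :: "'v set \<Rightarrow> ('v \<times> 'v) set \<Rightarrow> 'v \<Rightarrow> 'v \<Rightarrow> nat" where
  "tdist V E u v = (LEAST n. \<exists>xs. walk V E xs u v \<and> length xs = Suc n)"

definition rooted_tree :: "'v set \<Rightarrow> ('v \<times> 'v) set \<Rightarrow> 'v \<Rightarrow> bool" where
  "rooted_tree V E r0 \<longleftrightarrow> tree V E \<and> r0 \<in> V"

text \<open>depth of a vertex and of the rooted tree (in enat, \<infinity> playing the role of omega)\<close>
definition dep :: "'v set \<Rightarrow> ('v \<times> 'v) set \<Rightarrow> 'v \<Rightarrow> 'v \<Rightarrow> nat" where
  "dep V E r0 v = tdist V E r0 v"

definition dep_tree :: "'v set \<Rightarrow> ('v \<times> 'v) set \<Rightarrow> 'v \<Rightarrow> enat" where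
  "dep_tree V E r0 = (SUP v\<in>V. enat (dep V E r0 v))"

text \<open>A ray is represented as a partial map \<open>nat \<rightharpoonup> 'v\<close>, \<open>i \<mapsto> \<alpha>_i\<close>, whose domain is
  an initial segment of nat containing 0 (all of nat for rays of length omega),
  with \<open>\<alpha>_0 = r0\<close> and \<open>d_T(\<alpha>_i,\<alpha>_j) = |i - j|\<close> (geodesic).\<close>
definition ray :: "'v set \<Rightarrow> ('v \<times> 'v) set \<Rightarrow> 'v \<Rightarrow> (nat \<Rightarrow> 'v option) \<Rightarrow> bool" where
  "ray V E r0 \<alpha> \<longleftrightarrow> \<alpha> 0 = Some r0 \<and>
     (\<forall>i j. j \<le> i \<longrightarrow> \<alpha> i \<noteq> None \<longrightarrow> \<alpha> j \<noteq> None) \<and>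
     (\<forall>i j x y. \<alpha> i = Some x \<longrightarrow> \<alpha> j = Some y \<longrightarrow>
        x \<in> V \<and> y \<in> V \<and> tdist V E x y = (if i \<le> j then j - i else i - j))"

definition ray_len :: "(nat \<Rightarrow> 'v option) \<Rightarrow> enat" where
  "ray_len \<alpha> = (if finite (dom \<alpha>) then enat (Max (dom \<alpha>)) else \<infinity>)"

definition ray_le :: "(nat \<Rightarrow> 'v option) \<Rightarrow> (nat \<Rightarrow> 'v option) \<Rightarrow> bool" where
  "ray_le \<alpha> \<beta> \<longleftrightarrow> ray_len \<alpha> \<le> ray_len \<beta> \<and> (\<forall>i. enat i \<le> ray_len \<alpha> \<longrightarrow> \<alpha> i = \<beta> i)"

definition maximal_ray :: "'v set \<Rightarrow> ('v \<times> 'v) set \<Rightarrow> 'v \<Rightarrow> (nat \<Rightarrow> 'v option) \<Rightarrow> bool" where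
  "maximal_ray V E r0 \<alpha> \<longleftrightarrow> ray V E r0 \<alpha> \<and>
     (\<forall>\<beta>. ray V E r0 \<beta> \<longrightarrow> ray_le \<alpha> \<beta> \<longrightarrow> \<beta> = \<alpha>)"

definition uniform :: "'v set \<Rightarrow> ('v \<times> 'v) set \<Rightarrow> 'v \<Rightarrow> bool" where
  "uniform V E r0 \<longleftrightarrow> (\<forall>\<alpha> \<beta>. maximal_ray V E r0 \<alpha> \<longrightarrow> maximal_ray V E r0 \<beta> \<longrightarrow>
     ray_len \<alpha> = ray_len \<beta>)"

definition ray_meet :: "(nat \<Rightarrow> 'v option) \<Rightarrow> (nat \<Rightarrow> 'v option) \<Rightarrow> (nat \<Rightarrow> 'v option)" where
  "ray_meet \<alpha> \<beta> = (\<lambda>i. if \<forall>j\<le>i. \<alpha> j = \<beta> j then \<alpha> i else None)"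

definition elliptic_contraction :: "'v set \<Rightarrow> ('v \<times> 'v) set \<Rightarrow> 'v \<Rightarrow> ('v \<Rightarrow> 'v) \<Rightarrow> bool" where
  "elliptic_contraction V E r0 f \<longleftrightarrow>
     (\<forall>v\<in>V. f v \<in> V \<and> dep V E r0 (f v) = dep V E r0 v) \<and>
     (\<forall>u\<in>V. \<forall>v\<in>V. tdist V E (f u) (f v) \<le> tdist V E u v)"

text \<open>An elliptic action, written as a right action \<open>v \<mapsto> vm = \<theta> m v\<close>, so that
  \<open>v(mm') = (vm)m'\<close> and \<open>v1 = v\<close> (on the vertex set).\<close>
definition elliptic_action :: "'v set \<Rightarrow> ('v \<times> 'v) set \<Rightarrow> 'v \<Rightarrow> ('m::monoid_mult \<Rightarrow> 'v \<Rightarrow> 'v) \<Rightarrow> bool" where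
  "elliptic_action V E r0 \<theta> \<longleftrightarrow> (\<forall>m. elliptic_contraction V E r0 (\<theta> m)) \<and>
     (\<forall>v\<in>V. \<theta> 1 v = v) \<and> (\<forall>m m'. \<forall>v\<in>V. \<theta> (m * m') v = \<theta> m' (\<theta> m v))"

definition ray_act :: "('m \<Rightarrow> 'v \<Rightarrow> 'v) \<Rightarrow> 'm \<Rightarrow> (nat \<Rightarrow> 'v option) \<Rightarrow> (nat \<Rightarrow> 'v option)" where
  "ray_act \<theta> m \<alpha> = (\<lambda>i. map_option (\<theta> m) (\<alpha> i))"

definition alpha_transitive :: "'v set \<Rightarrow> (nat \<Rightarrow> 'v option) \<Rightarrow> ('m \<Rightarrow> 'v \<Rightarrow> 'v) \<Rightarrow> bool" where
  "alpha_transitive V \<alpha> \<theta> \<longleftrightarrow> V = (\<Union>i\<in>dom \<alpha>. range (\<lambda>m. \<theta> m (the (\<alpha> i))))"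

definition elliptic_Mtree ::
  "'v set \<Rightarrow> ('v \<times> 'v) set \<Rightarrow> 'v \<Rightarrow> (nat \<Rightarrow> 'v option) \<Rightarrow> ('m::monoid_mult \<Rightarrow> 'v \<Rightarrow> 'v) \<Rightarrow> bool" where
  "elliptic_Mtree V E r0 \<alpha> \<theta> \<longleftrightarrow> rooted_tree V E r0 \<and> uniform V E r0 \<and>
     maximal_ray V E r0 \<alpha> \<and> elliptic_action V E r0 \<theta> \<and> alpha_transitive V \<alpha> \<theta>"

definition strongly_faithful :: "(nat \<Rightarrow> 'v option) \<Rightarrow> ('m \<Rightarrow> 'v \<Rightarrow> 'v) \<Rightarrow> bool" where
  "strongly_faithful \<alpha> \<theta> \<longleftrightarrow> (\<forall>m m'. ray_act \<theta> m \<alpha> = ray_act \<theta> m' \<alpha> \<longrightarrow> m = m')"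

definition length_function :: "('m::monoid_mult \<Rightarrow> 'm \<Rightarrow> enat) \<Rightarrow> bool" where
  "length_function D \<longleftrightarrow>
     (\<forall>m m'. D m m' = D m' m) \<and>
     (\<forall>m m' m''. D m' m'' \<le> D m m) \<and>
     (\<forall>m m' m''. D m' m'' \<le> D (m' * m) (m'' * m)) \<and>
     (\<forall>m m' m''. D m m'' \<ge> min (D m m') (D m' m''))"

definition D_chi :: "('m \<Rightarrow> 'v \<Rightarrow> 'v) \<Rightarrow> (nat \<Rightarrow> 'v option) \<Rightarrow> 'm \<Rightarrow> 'm \<Rightarrow> enat" where
  "D_chi \<theta> \<alpha> m m' = ray_len (ray_meet (ray_act \<theta> m \<alpha>) (ray_act \<theta> m' \<alpha>))"

text \<open>An ultrametric with values in the natural numbers (finite values of enat).\<close>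
definition ultrametric :: "('m \<Rightarrow> 'm \<Rightarrow> enat) \<Rightarrow> bool" where
  "ultrametric d \<longleftrightarrow> (\<forall>x y. d x y \<noteq> \<infinity>) \<and>
     (\<forall>x y. d x y = 0 \<longleftrightarrow> x = y) \<and> (\<forall>x y. d x y = d y x) \<and>
     (\<forall>x y z. d x z \<le> max (d x y) (d y z))"

end

theory Submission
  imports Defs
begin

text \<open>
  Everything rests on one geometric observation: an elliptic contraction fixes the root and maps
  the ray \<open>\<alpha>\<close> onto a geodesic issuing from the root (depths are preserved, edges cannot collapse).
  By uniqueness of paths in a tree, two such geodesics that meet at some depth coincide below it,
  so the translates \<open>\<alpha> m\<close>, \<open>\<alpha> m'\<close> agree exactly on an initial segment.

  Part (i) follows from
  the latter alone.  In finite depth \<open>l\<close> the ray \<open>\<alpha>\<close> has length \<open>l\<close>, \<open>D\<^sub>\<chi>(m, m')\<close> is the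
  branching depth of \<open>\<alpha> m\<close> and \<open>\<alpha> m'\<close>, and parts (ii) and (iii) follow.
\<close>

section \<open>Walks, paths and the distance in a tree\<close>

lemma walk_successively:
  "walk V E xs u v \<longleftrightarrow> xs \<noteq> [] \<and> hd xs = u \<and> last xs = v \<and> set xs \<subseteq> V \<and>
     successively (\<lambda>x y. (x, y) \<in> E) xs"
  unfolding walk_def successively_conv_nth by simp

lemma successively_cut_cycle:
  assumes "successively P (as @ [y] @ bs @ [y] @ cs)"
  shows "successively P (as @ [y] @ cs)"
proof -
  have split: "as @ [y] @ bs @ [y] @ cs = as @ ((y # bs) @ (y # cs))" by simp
  have "successively P ((y # bs) @ (y # cs))"
    using assms unfolding split successively_append_iff by blast
  then have "successively P (y # cs)" unfolding successively_append_iff by blast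
  moreover have "successively P as" "as = [] \<or> P (last as) y"
    using assms unfolding split successively_append_iff by auto
  ultimately have "successively P (as @ (y # cs))" unfolding successively_append_iff by auto
  then show ?thesis by simp
qed

lemma walk_shorten:
  assumes "walk V E ws u v" "\<not> distinct ws"
  obtains ws' where "walk V E ws' u v" "length ws' < length ws"
proof -
  obtain xs ys zs y where ws: "ws = xs @ [y] @ ys @ [y] @ zs"
    using not_distinct_decomp[OF assms(2)] by blast
  have "walk V E (xs @ [y] @ zs) u v"
    using assms(1) successively_cut_cycle[of "\<lambda>x y. (x, y) \<in> E" xs y ys zs]
    unfolding walk_successively ws by (auto simp: hd_append split: if_splits)
  with ws that show ?thesis by auto
qed

lemma tree_gpath_ex1:
  assumes "tree V E" "u \<in> V" "v \<in> V"
  shows "\<exists>!xs. gpath V E xs u v"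
proof -
  have "\<forall>u\<in>V. \<forall>v\<in>V. \<exists>!xs. gpath V E xs u v"
    using assms(1) unfolding tree_def by (elim conjE)
  then show ?thesis using assms(2,3) by blast
qed

lemma tree_gpath_exists:
  assumes "tree V E" "u \<in> V" "v \<in> V"
  obtains xs where "gpath V E xs u v"
  using tree_gpath_ex1[OF assms] by blast

lemma tree_gpath_unique:
  assumes "tree V E" "u \<in> V" "v \<in> V" "gpath V E xs u v" "gpath V E ys u v"
  shows "xs = ys"
  using tree_gpath_ex1[OF assms(1-3)] assms(4,5) by (elim ex1E) blast

text \<open>In a tree the distance is the number of edges of the unique path: a shortest walk
  is automatically a path, hence equals the given one.\<close>
lemma tdist_gpath:
  assumes "tree V E" "gpath V E xs u v"
  shows "tdist V E u v = length xs - 1"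
proof -
  let ?P = "\<lambda>n. \<exists>ws. walk V E ws u v \<and> length ws = Suc n"
  have xs: "walk V E xs u v" "distinct xs" "xs \<noteq> []"
    using assms(2) by (auto simp: gpath_def walk_def)
  then have "?P (length xs - 1)" by (intro exI[of _ xs]) simp
  then have "?P (tdist V E u v)" unfolding tdist_def by (rule LeastI)
  then obtain ws where ws: "walk V E ws u v" "length ws = Suc (tdist V E u v)" by blast
  have "distinct ws"
  proof (rule ccontr)
    assume "\<not> distinct ws"
    with ws(1) obtain ws' where ws': "walk V E ws' u v" "length ws' < length ws"
      by (rule walk_shorten)
    then have "ws' \<noteq> []" by (simp add: walk_def)
    with ws' have "?P (length ws' - 1)" by (intro exI[of _ ws']) simp
    then have "tdist V E u v \<le> length ws' - 1" unfolding tdist_def by (rule Least_le)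
    with ws'(2) ws(2) \<open>ws' \<noteq> []\<close> show False by (cases ws') simp_all
  qed
  then have "gpath V E ws u v" using ws(1) by (simp add: gpath_def)
  moreover have "u \<in> V" "v \<in> V" using xs by (auto simp: walk_def)
  ultimately have "ws = xs" using tree_gpath_unique[OF assms(1)] assms(2) by blast
  with ws show ?thesis by simp
qed

lemma tdist_self:
  assumes "u \<in> V" shows "tdist V E u u = 0"
  unfolding tdist_def by (rule Least_eq_0) (rule exI[of _ "[u]"], simp add: walk_def assms)

lemma tdist_eq_0_iff:
  assumes "tree V E" "u \<in> V" "v \<in> V"
  shows "tdist V E u v = 0 \<longleftrightarrow> u = v"
proof
  assume d: "tdist V E u v = 0"
  obtain xs where g: "gpath V E xs u v" by (rule tree_gpath_exists[OF assms])
  then have "xs \<noteq> []" by (simp add: gpath_def walk_def)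
  then have "length xs = 1" using tdist_gpath[OF assms(1) g] d by (cases xs) simp_all
  then obtain x where "xs = [x]" by (cases xs) auto
  then show "u = v" using g by (auto simp: gpath_def walk_def)
qed (simp add: tdist_self assms)

lemma tdist_eq_1_edge:
  assumes "tree V E" "u \<in> V" "v \<in> V" "tdist V E u v = 1"
  shows "(u, v) \<in> E"
proof -
  obtain xs where g: "gpath V E xs u v" by (rule tree_gpath_exists[OF assms(1-3)])
  then have "xs \<noteq> []" by (simp add: gpath_def walk_def)
  then have "length xs = 2" using tdist_gpath[OF assms(1) g] assms(4) by (cases xs) simp_all
  then obtain x y where "xs = [x, y]" by (cases xs; cases "tl xs") auto
  then show ?thesis using g by (auto simp: gpath_def walk_successively)
qed

section \<open>Geodesics issuing from the root\<close>

text \<open>The images of a ray under elliptic contractions are of this kind.\<close>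
definition root_geodesic :: "'v set \<Rightarrow> ('v \<times> 'v) set \<Rightarrow> 'v \<Rightarrow> (nat \<Rightarrow> 'v) \<Rightarrow> nat \<Rightarrow> bool" where
  "root_geodesic V E r0 a n \<longleftrightarrow>
     (\<forall>j\<le>n. a j \<in> V \<and> tdist V E r0 (a j) = j) \<and> (\<forall>j<n. (a j, a (Suc j)) \<in> E)"

lemma successively_map_upt:
  assumes "\<And>i. m \<le> i \<Longrightarrow> Suc i < n \<Longrightarrow> P (f i) (f (Suc i))"
  shows "successively P (map f [m..<n])"
  unfolding successively_conv_nth using assms by auto

text \<open>A root geodesic starts at the root and, having distinct depths, is a path.\<close>
lemma root_geodesic_start:
  assumes "tree V E" "r0 \<in> V" "root_geodesic V E r0 a n"
  shows "a 0 = r0"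
  using assms tdist_eq_0_iff[OF assms(1,2), of "a 0"] unfolding root_geodesic_def by auto

lemma root_geodesic_gpath:
  assumes "tree V E" "r0 \<in> V" and geo: "root_geodesic V E r0 a n"
  shows "gpath V E (map a [0..<Suc n]) r0 (a n)"
proof -
  have depth: "j \<le> n \<Longrightarrow> tdist V E r0 (a j) = j" for j using geo by (simp add: root_geodesic_def)
  have "inj_on a {0..<Suc n}" by (rule inj_onI) (metis depth atLeastLessThan_iff less_Suc_eq_le)
  then have "distinct (map a [0..<Suc n])" by (simp add: distinct_map del: upt_Suc)
  moreover have "successively (\<lambda>x y. (x, y) \<in> E) (map a [0..<Suc n])"
    using geo by (intro successively_map_upt) (simp add: root_geodesic_def)
  moreover have "set (map a [0..<Suc n]) \<subseteq> V" using geo by (auto simp: root_geodesic_def)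
  moreover have "hd (map a [0..<Suc n]) = r0"
    using root_geodesic_start[OF assms] by (simp add: hd_map del: upt_Suc)
  ultimately show ?thesis unfolding gpath_def walk_successively by simp
qed

text \<open>Uniqueness of paths: two root geodesics ending in the same vertex agree below it.\<close>
lemma root_geodesic_unique:
  assumes "tree V E" "r0 \<in> V" "root_geodesic V E r0 a n" "root_geodesic V E r0 b n"
    and "a n = b n" "i \<le> n"
  shows "a i = b i"
proof -
  have "a n \<in> V" using assms(3) by (simp add: root_geodesic_def)
  moreover have "gpath V E (map b [0..<Suc n]) r0 (a n)"
    using root_geodesic_gpath[OF assms(1,2,4)] assms(5) by simp
  ultimately have "map a [0..<Suc n] = map b [0..<Suc n]"
    using tree_gpath_unique[OF assms(1,2)] root_geodesic_gpath[OF assms(1-3)] by blast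
  then show ?thesis using assms(6) by (simp add: map_eq_conv del: upt_Suc)
qed

text \<open>Two root geodesics of length \<open>l\<close> agree exactly on an initial segment \<open>{0..k}\<close>:
  they share the root, and agreeing at some index forces agreement below it.\<close>
lemma root_geodesic_branch_point:
  assumes tree: "tree V E" "r0 \<in> V"
    and geo: "root_geodesic V E r0 a l" "root_geodesic V E r0 b l"
  obtains k where "k \<le> l" "\<And>i. i \<le> l \<Longrightarrow> a i = b i \<longleftrightarrow> i \<le> k"
proof -
  define S where "S = {i. i \<le> l \<and> a i = b i}"
  have "0 \<in> S" unfolding S_def
    using root_geodesic_start[OF tree geo(1)] root_geodesic_start[OF tree geo(2)] by simp
  then have "finite S" "S \<noteq> {}" unfolding S_def by auto
  define k where "k = Max S"
  have "k \<in> S" unfolding k_def using Max_in \<open>finite S\<close> \<open>S \<noteq> {}\<close> by blast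
  then have "k \<le> l" unfolding S_def by simp
  have "a i = b i \<longleftrightarrow> i \<le> k" if "i \<le> l" for i
  proof
    assume "a i = b i"
    then show "i \<le> k" unfolding k_def using Max_ge \<open>finite S\<close> that S_def by blast
  next
    assume "i \<le> k"
    have "root_geodesic V E r0 a k" "root_geodesic V E r0 b k"
      using geo \<open>k \<le> l\<close> by (auto simp: root_geodesic_def)
    then show "a i = b i" using root_geodesic_unique[OF tree] \<open>k \<in> S\<close> \<open>i \<le> k\<close> S_def by blast
  qed
  with \<open>k \<le> l\<close> that show ?thesis by blast
qed

definition branch_path :: "(nat \<Rightarrow> 'v) \<Rightarrow> (nat \<Rightarrow> 'v) \<Rightarrow> nat \<Rightarrow> nat \<Rightarrow> 'v list" where
  "branch_path a b k l = rev (map a [k..<Suc l]) @ map b [Suc k..<Suc l]"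

text \<open>If \<open>a\<close> and \<open>b\<close> agree exactly up to \<open>k\<close> then the branch path is a walk,
  since it turns at the common vertex \<open>a k = b k\<close>.\<close>
lemma branch_path_walk:
  assumes "sym E" and geo_a: "root_geodesic V E r0 a l" and geo_b: "root_geodesic V E r0 b l"
    and "k \<le> l" and agree: "\<And>i. i \<le> l \<Longrightarrow> a i = b i \<longleftrightarrow> i \<le> k"
  shows "walk V E (branch_path a b k l) (a l) (b l)"
proof -
  define A where "A = map a [k..<Suc l]"
  define B where "B = map b [Suc k..<Suc l]"
  have A_split: "A = a k # map a [Suc k..<Suc l]"
    unfolding A_def using \<open>k \<le> l\<close> by (simp add: upt_conv_Cons del: upt_Suc)
  have "hd (rev A @ B) = a l" unfolding A_def using \<open>k \<le> l\<close> by simp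
  moreover have "last (rev A @ B) = b l"
  proof (cases "k < l")
    case True then show ?thesis unfolding B_def by simp
  next
    case False
    then have "k = l" using \<open>k \<le> l\<close> by simp
    then show ?thesis unfolding A_split B_def using agree[of l] by simp
  qed
  moreover have "set (rev A @ B) \<subseteq> V"
    using geo_a geo_b unfolding A_def B_def root_geodesic_def by (auto simp del: upt_Suc)
  moreover have "successively (\<lambda>x y. (x, y) \<in> E) (rev A @ B)"
  proof -
    have "successively (\<lambda>x y. (x, y) \<in> E) A"
      unfolding A_def using geo_a by (intro successively_map_upt) (simp add: root_geodesic_def)
    then have "successively (\<lambda>x y. (y, x) \<in> E) A"
      by (rule successively_mono) (use \<open>sym E\<close> in \<open>auto dest: symD\<close>)
    moreover have "successively (\<lambda>x y. (x, y) \<in> E) B"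
      unfolding B_def using geo_b by (intro successively_map_upt) (simp add: root_geodesic_def)
    moreover have "B = [] \<or> (a k, hd B) \<in> E"
    proof (cases "k < l")
      case True
      then have "hd B = b (Suc k)" unfolding B_def by (simp add: hd_map del: upt_Suc)
      then show ?thesis using agree[of k] True geo_b by (simp add: root_geodesic_def)
    qed (simp add: B_def)
    moreover have "last (rev A) = a k" unfolding A_split by (simp add: last_rev)
    ultimately show ?thesis unfolding successively_append_iff successively_rev by simp
  qed
  moreover have "rev A @ B \<noteq> []" unfolding A_split by simp
  ultimately show ?thesis unfolding walk_successively branch_path_def A_def B_def by simp
qed

text \<open>The branch path has no repetitions: vertices on either side are told apart by their depth,
  and a vertex \<open>a i = b i\<close> with \<open>i > k\<close> would contradict the exact agreement.\<close>
lemma branch_path_distinct: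
  assumes geo_a: "root_geodesic V E r0 a l" and geo_b: "root_geodesic V E r0 b l"
    and agree: "\<And>i. i \<le> l \<Longrightarrow> a i = b i \<longleftrightarrow> i \<le> k"
  shows "distinct (branch_path a b k l)"
proof -
  have depth_a: "tdist V E r0 (a j) = j" and depth_b: "tdist V E r0 (b j) = j" if "j \<le> l" for j
    using that geo_a geo_b by (simp_all add: root_geodesic_def)
  have "inj_on a {k..<Suc l}" by (rule inj_onI) (metis depth_a atLeastLessThan_iff less_Suc_eq_le)
  moreover have "inj_on b {Suc k..<Suc l}"
    by (rule inj_onI) (metis depth_b atLeastLessThan_iff less_Suc_eq_le)
  moreover have "set (map a [k..<Suc l]) \<inter> set (map b [Suc k..<Suc l]) = {}"
  proof (rule ccontr)
    assume "set (map a [k..<Suc l]) \<inter> set (map b [Suc k..<Suc l]) \<noteq> {}"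
    then obtain i j where ij: "k \<le> i" "i \<le> l" "Suc k \<le> j" "j \<le> l" "a i = b j"
      by (auto simp: less_Suc_eq_le simp del: upt_Suc)
    then have "i = j" using depth_a depth_b by metis
    then show False using agree[of j] ij by simp
  qed
  ultimately show ?thesis unfolding branch_path_def by (simp add: distinct_map del: upt_Suc)
qed

text \<open>Hence two root geodesics of length \<open>l\<close> that agree exactly up to index \<open>k\<close> end at
  distance \<open>2l - 2k\<close>, the number of edges of the branch path.\<close>
lemma root_geodesic_branch_dist:
  assumes tree: "tree V E"
    and geo_a: "root_geodesic V E r0 a l" and geo_b: "root_geodesic V E r0 b l"
    and "k \<le> l" and agree: "\<And>i. i \<le> l \<Longrightarrow> a i = b i \<longleftrightarrow> i \<le> k"
  shows "tdist V E (a l) (b l) = 2 * l - 2 * k"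
proof -
  have "sym E" using tree by (simp add: tree_def)
  then have "gpath V E (branch_path a b k l) (a l) (b l)"
    using branch_path_walk[OF _ geo_a geo_b \<open>k \<le> l\<close> agree] branch_path_distinct[OF geo_a geo_b agree]
    by (simp add: gpath_def)
  then have "tdist V E (a l) (b l) = length (branch_path a b k l) - 1" by (rule tdist_gpath[OF tree])
  also have "\<dots> = 2 * l - 2 * k" unfolding branch_path_def using \<open>k \<le> l\<close> by simp arith
  finally show ?thesis .
qed

section \<open>Lengths and meets of partial maps on initial segments\<close>

definition initial_dom :: "(nat \<Rightarrow> 'v option) \<Rightarrow> bool" where
  "initial_dom f \<longleftrightarrow> (\<forall>i j. j \<le> i \<longrightarrow> f i \<noteq> None \<longrightarrow> f j \<noteq> None)"

lemma ray_len_ge: "i \<in> dom f \<Longrightarrow> enat i \<le> ray_len f"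
  unfolding ray_len_def by auto

lemma ray_len_mono:
  assumes "dom f \<subseteq> dom g" "dom f \<noteq> {}"
  shows "ray_len f \<le> ray_len g"
proof (cases "finite (dom g)")
  case True
  then have "finite (dom f)" using assms(1) finite_subset by blast
  then have "Max (dom f) \<le> Max (dom g)" using True assms by (intro Max_mono) auto
  then show ?thesis using True \<open>finite (dom f)\<close> unfolding ray_len_def by simp
qed (simp add: ray_len_def)

lemma ray_len_dom:
  assumes "initial_dom f" "dom f \<noteq> {}" "enat i \<le> ray_len f"
  shows "i \<in> dom f"
proof (cases "finite (dom f)")
  case True
  then have "i \<le> Max (dom f)" using assms(3) unfolding ray_len_def by simp
  then show ?thesis using assms(1,2) Max_in[OF True] unfolding initial_dom_def by blast
next
  case False
  then obtain j where "j \<in> dom f" "i \<le> j" using infinite_nat_iff_unbounded_le by blast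
  then show ?thesis using assms(1) unfolding initial_dom_def by blast
qed

lemma ray_len_le_iff:
  assumes "initial_dom g" "dom f \<noteq> {}" "dom g \<noteq> {}"
  shows "ray_len f \<le> ray_len g \<longleftrightarrow> dom f \<subseteq> dom g"
proof
  assume le: "ray_len f \<le> ray_len g"
  show "dom f \<subseteq> dom g"
  proof
    fix i assume "i \<in> dom f"
    then have "enat i \<le> ray_len g" using order_trans[OF ray_len_ge le] by blast
    then show "i \<in> dom g" by (rule ray_len_dom[OF assms(1,3)])
  qed
qed (rule ray_len_mono[OF _ assms(2)])

lemma ray_len_atMost:
  assumes "dom f = {..l}" shows "ray_len f = enat l"
proof -
  have "Max {..l} = l" by (rule Max_eqI) auto
  then show ?thesis unfolding ray_len_def assms by simp
qed

lemma dom_ray_meet: "i \<in> dom (ray_meet f g) \<longleftrightarrow> f i \<noteq> None \<and> (\<forall>j\<le>i. f j = g j)"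
  unfolding ray_meet_def dom_def by auto

lemma ray_meet_sym: "ray_meet f g = ray_meet g f"
  unfolding ray_meet_def by (rule ext) auto

lemma ray_meet_self: "ray_meet f f = f"
  unfolding ray_meet_def by simp

lemma initial_dom_ray_meet:
  assumes "initial_dom f" shows "initial_dom (ray_meet f g)"
  unfolding initial_dom_def
proof (intro allI impI)
  fix i j assume "j \<le> i" "ray_meet f g i \<noteq> None"
  then have "f i \<noteq> None" "\<forall>k\<le>j. f k = g k" using dom_ray_meet[of i f g] by auto
  then show "ray_meet f g j \<noteq> None"
    using assms \<open>j \<le> i\<close> dom_ray_meet[of j f g] unfolding initial_dom_def by blast
qed

lemma dom_ray_meet_trans: "dom (ray_meet f g) \<inter> dom (ray_meet g h) \<subseteq> dom (ray_meet f h)"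
  by (rule subsetI) (simp add: dom_ray_meet, metis order_refl)

section \<open>Rays and elliptic contractions\<close>

lemma ray_initial_dom: "ray V E r0 \<alpha> \<Longrightarrow> initial_dom \<alpha>"
  unfolding ray_def initial_dom_def by blast

lemma ray_vertex:
  assumes "ray V E r0 \<alpha>" "\<alpha> i = Some x"
  shows "x \<in> V" "tdist V E r0 x = i"
proof -
  have "\<alpha> 0 = Some r0" using assms(1) by (simp add: ray_def)
  then have "x \<in> V \<and> tdist V E r0 x = (if 0 \<le> i then i - 0 else 0 - i)"
    using assms unfolding ray_def by blast
  then show "x \<in> V" "tdist V E r0 x = i" by simp_all
qed

lemma ray_step:
  assumes "ray V E r0 \<alpha>" "\<alpha> j = Some x" "\<alpha> (Suc j) = Some y"
  shows "tdist V E x y = 1"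
proof -
  have "tdist V E x y = (if j \<le> Suc j then Suc j - j else j - Suc j)"
    using assms unfolding ray_def by blast
  then show ?thesis by simp
qed

text \<open>An elliptic contraction preserves depth, so it fixes the root.\<close>
lemma contraction_fixes_root:
  assumes "tree V E" "r0 \<in> V" "elliptic_contraction V E r0 f"
  shows "f r0 = r0"
proof -
  have "f r0 \<in> V" "tdist V E r0 (f r0) = 0"
    using assms(2,3) tdist_self[OF assms(2)] by (auto simp: elliptic_contraction_def dep_def)
  then show ?thesis using tdist_eq_0_iff[OF assms(1,2)] by simp
qed

text \<open>Adjacent vertices of a ray stay adjacent under an elliptic contraction: their images are
  at distance at most one, and distinct because their depths differ.\<close>
lemma contraction_ray_edge:
  assumes tree: "tree V E" and ray: "ray V E r0 \<alpha>" and f: "elliptic_contraction V E r0 f"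
    and x: "\<alpha> j = Some x" and y: "\<alpha> (Suc j) = Some y"
  shows "(f x, f y) \<in> E"
proof -
  have xy: "x \<in> V" "y \<in> V" using ray_vertex(1)[OF ray x] ray_vertex(1)[OF ray y] .
  have fxy: "f x \<in> V" "f y \<in> V" using f xy by (simp_all add: elliptic_contraction_def)
  have "tdist V E (f x) (f y) \<le> tdist V E x y" using f xy by (simp add: elliptic_contraction_def)
  also have "\<dots> = 1" by (rule ray_step[OF ray x y])
  finally have le: "tdist V E (f x) (f y) \<le> 1" .
  have "dep V E r0 (f x) \<noteq> dep V E r0 (f y)"
    using f xy ray_vertex(2)[OF ray x] ray_vertex(2)[OF ray y]
    by (simp add: elliptic_contraction_def dep_def)
  then have "f x \<noteq> f y" by metis
  then have "tdist V E (f x) (f y) \<noteq> 0" using tdist_eq_0_iff[OF tree fxy] by simp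
  with le have "tdist V E (f x) (f y) = 1" by simp
  then show ?thesis by (rule tdist_eq_1_edge[OF tree fxy])
qed

lemma contraction_image_root_geodesic:
  assumes tree: "tree V E" and ray: "ray V E r0 \<alpha>" and f: "elliptic_contraction V E r0 f"
    and "\<alpha> n \<noteq> None"
  shows "root_geodesic V E r0 (\<lambda>j. f (the (\<alpha> j))) n"
  unfolding root_geodesic_def
proof (intro conjI allI impI)
  have some: "\<alpha> j = Some (the (\<alpha> j))" if "j \<le> n" for j
    using ray_initial_dom[OF ray] that \<open>\<alpha> n \<noteq> None\<close> unfolding initial_dom_def by auto
  fix j
  show "f (the (\<alpha> j)) \<in> V" "tdist V E r0 (f (the (\<alpha> j))) = j" if "j \<le> n"
    using ray_vertex[OF ray some[OF that]] f by (simp_all add: elliptic_contraction_def dep_def)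
  show "(f (the (\<alpha> j)), f (the (\<alpha> (Suc j)))) \<in> E" if "j < n"
    using that by (intro contraction_ray_edge[OF tree ray f, of j] some) simp_all
qed

section \<open>The length function \<open>D\<^sub>\<chi>\<close>\<close>

lemma elliptic_MtreeD:
  assumes "elliptic_Mtree V E r0 \<alpha> \<theta>"
  shows "tree V E" "r0 \<in> V" "ray V E r0 \<alpha>" "elliptic_contraction V E r0 (\<theta> m)"
    "\<And>x. x \<in> V \<Longrightarrow> \<theta> (m * m') x = \<theta> m' (\<theta> m x)"
  using assms unfolding elliptic_Mtree_def rooted_tree_def maximal_ray_def elliptic_action_def
  by blast+

lemma dom_ray_act: "dom (ray_act \<theta> m \<alpha>) = dom \<alpha>"
  unfolding ray_act_def dom_def by simp

lemma dom_ray_meet_ray_act: "dom (ray_meet f g) \<subseteq> dom (ray_meet (ray_act \<theta> m f) (ray_act \<theta> m g))"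
  by (rule subsetI) (simp add: dom_ray_meet ray_act_def, metis order_refl)

lemma initial_dom_ray_act: "initial_dom \<alpha> \<Longrightarrow> initial_dom (ray_act \<theta> m \<alpha>)"
  unfolding initial_dom_def ray_act_def by simp

lemma ray_act_mult:
  assumes chi: "elliptic_Mtree V E r0 \<alpha> \<theta>"
  shows "ray_act \<theta> (m * m') \<alpha> = ray_act \<theta> m' (ray_act \<theta> m \<alpha>)"
proof
  fix i show "ray_act \<theta> (m * m') \<alpha> i = ray_act \<theta> m' (ray_act \<theta> m \<alpha>) i"
  proof (cases "\<alpha> i")
    case (Some x)
    then have "x \<in> V" by (rule ray_vertex(1)[OF elliptic_MtreeD(3)[OF chi]])
    then show ?thesis using Some elliptic_MtreeD(5)[OF chi] by (simp add: ray_act_def)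
  qed (simp add: ray_act_def)
qed

text \<open>All translates \<open>\<alpha> m\<close> start at the root, so any two of them have a nonempty meet.\<close>
lemma root_in_meet:
  assumes chi: "elliptic_Mtree V E r0 \<alpha> \<theta>"
  shows "0 \<in> dom (ray_meet (ray_act \<theta> m \<alpha>) (ray_act \<theta> m' \<alpha>))"
proof -
  have "\<alpha> 0 = Some r0" using elliptic_MtreeD(3)[OF chi] by (simp add: ray_def)
  moreover have "\<theta> k r0 = r0" for k
    by (rule contraction_fixes_root[OF elliptic_MtreeD(1,2,4)[OF chi]])
  ultimately show ?thesis by (simp add: dom_ray_meet ray_act_def)
qed

text \<open>Part (i) of the proposition: \<open>D\<^sub>\<chi>(m, m') = |\<alpha> m \<and> \<alpha> m'|\<close> is a length function.
  (L2) and (L3) hold since meets only shrink domains and the action on rays preserves agreement;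
  (L4) holds since of two initial segments the shorter one is contained in the longer one.\<close>
lemma D_chi_length_function:
  assumes chi: "elliptic_Mtree V E r0 \<alpha> \<theta>"
  shows "length_function (D_chi \<theta> \<alpha>)"
proof -
  let ?r = "\<lambda>m. ray_act \<theta> m \<alpha>"
  have initial: "initial_dom (ray_meet (?r m) (?r m'))" for m m'
    using ray_initial_dom[OF elliptic_MtreeD(3)[OF chi]]
    by (intro initial_dom_ray_meet initial_dom_ray_act)
  have nonempty: "dom (ray_meet (?r m) (?r m')) \<noteq> {}" for m m'
    using root_in_meet[OF chi] by blast
  have L1: "D_chi \<theta> \<alpha> m m' = D_chi \<theta> \<alpha> m' m" for m m'
    unfolding D_chi_def by (simp add: ray_meet_sym)
  have L2: "D_chi \<theta> \<alpha> m' m'' \<le> D_chi \<theta> \<alpha> m m" for m m' m''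
  proof -
    have "dom (ray_meet (?r m') (?r m'')) \<subseteq> dom (?r m')"
      using dom_ray_meet[of _ "?r m'" "?r m''"] by blast
    then show ?thesis unfolding D_chi_def ray_meet_self
      by (intro ray_len_mono[OF _ nonempty]) (simp add: dom_ray_act)
  qed
  have L3: "D_chi \<theta> \<alpha> m' m'' \<le> D_chi \<theta> \<alpha> (m' * m) (m'' * m)" for m m' m''
    unfolding D_chi_def ray_act_mult[OF chi] by (rule ray_len_mono[OF dom_ray_meet_ray_act nonempty])
  have L4: "min (D_chi \<theta> \<alpha> m m') (D_chi \<theta> \<alpha> m' m'') \<le> D_chi \<theta> \<alpha> m m''" for m m' m''
  proof -
    let ?A = "ray_meet (?r m) (?r m')" and ?B = "ray_meet (?r m') (?r m'')"
    have "ray_len ?A \<le> ray_len ?B \<or> ray_len ?B \<le> ray_len ?A" by (rule linear)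
    then have "dom ?A \<subseteq> dom ?B \<or> dom ?B \<subseteq> dom ?A"
      unfolding ray_len_le_iff[OF initial nonempty nonempty] .
    then have "dom ?A \<subseteq> dom (ray_meet (?r m) (?r m'')) \<or> dom ?B \<subseteq> dom (ray_meet (?r m) (?r m''))"
      using dom_ray_meet_trans[of "?r m" "?r m'" "?r m''"] by blast
    then show ?thesis unfolding D_chi_def
      using ray_len_mono[OF _ nonempty] min.coboundedI1 min.coboundedI2 by metis
  qed
  show ?thesis unfolding length_function_def using L1 L2 L3 L4 by blast
qed

section \<open>Trees of finite depth\<close>

text \<open>If the tree has finite depth \<open>l\<close> then \<open>\<alpha>\<close> has length exactly \<open>l\<close>: no vertex of
  \<open>\<alpha>\<close> is deeper, and by \<open>\<alpha>\<close>-transitivity a vertex of depth \<open>l\<close> is a translate of some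
  \<open>\<alpha>\<^sub>i\<close>, which forces \<open>i = l\<close>.\<close>
lemma finite_depth_dom:
  assumes chi: "elliptic_Mtree V E r0 \<alpha> \<theta>" and l: "dep_tree V E r0 = enat l"
  shows "dom \<alpha> = {..l}"
proof -
  note ray = elliptic_MtreeD(3)[OF chi]
  have below: "i \<le> l" if "\<alpha> i = Some x" for i x
  proof -
    have "enat (dep V E r0 x) \<le> dep_tree V E r0"
      unfolding dep_tree_def using ray_vertex(1)[OF ray that] by (rule SUP_upper)
    then show ?thesis using l ray_vertex(2)[OF ray that] by (simp add: dep_def)
  qed
  let ?S = "(\<lambda>v. enat (dep V E r0 v)) ` V"
  have "?S \<noteq> {}" using elliptic_MtreeD(2)[OF chi] by blast
  moreover have "Sup ?S = enat l" using l unfolding dep_tree_def by simp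
  ultimately have "finite ?S" "Max ?S = enat l" unfolding Sup_enat_def by (auto split: if_splits)
  then have "enat l \<in> ?S" using Max_in \<open>?S \<noteq> {}\<close> by metis
  then obtain v where "v \<in> V" "dep V E r0 v = l" by auto
  moreover obtain i m x where "\<alpha> i = Some x" "v = \<theta> m x"
    using \<open>v \<in> V\<close> chi unfolding elliptic_Mtree_def alpha_transitive_def by auto
  moreover have "dep V E r0 (\<theta> m x) = i"
    using elliptic_MtreeD(4)[OF chi, of m] ray_vertex[OF ray \<open>\<alpha> i = Some x\<close>]
    by (simp add: elliptic_contraction_def dep_def)
  ultimately have "\<alpha> l \<noteq> None" by simp
  then show ?thesis
    using below ray_initial_dom[OF ray] unfolding initial_dom_def by fastforce
qed

lemma translate_root_geodesic:
  assumes chi: "elliptic_Mtree V E r0 \<alpha> \<theta>" and l: "dep_tree V E r0 = enat l"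
  shows "root_geodesic V E r0 (\<lambda>j. \<theta> m (the (\<alpha> j))) l"
  using finite_depth_dom[OF chi l] elliptic_MtreeD[OF chi]
  by (intro contraction_image_root_geodesic) auto

text \<open>In finite depth \<open>l\<close>, \<open>D\<^sub>\<chi>(m, m')\<close> is the last index up to which the root geodesics
  \<open>\<alpha> m\<close> and \<open>\<alpha> m'\<close> agree; by uniqueness of root paths they agree exactly up to that index.\<close>
lemma D_chi_finite_depth:
  assumes chi: "elliptic_Mtree V E r0 \<alpha> \<theta>" and l: "dep_tree V E r0 = enat l"
  obtains k where "k \<le> l" "D_chi \<theta> \<alpha> m m' = enat k"
    "\<And>i. i \<le> l \<Longrightarrow> \<theta> m (the (\<alpha> i)) = \<theta> m' (the (\<alpha> i)) \<longleftrightarrow> i \<le> k"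
proof -
  define a where "a = (\<lambda>j. \<theta> m (the (\<alpha> j)))"
  define b where "b = (\<lambda>j. \<theta> m' (the (\<alpha> j)))"
  have dom_l: "dom \<alpha> = {..l}" by (rule finite_depth_dom[OF chi l])
  have geo: "root_geodesic V E r0 a l" "root_geodesic V E r0 b l"
    unfolding a_def b_def by (rule translate_root_geodesic[OF chi l])+
  obtain k where "k \<le> l" and agree: "\<And>i. i \<le> l \<Longrightarrow> a i = b i \<longleftrightarrow> i \<le> k"
    using root_geodesic_branch_point[OF elliptic_MtreeD(1,2)[OF chi] geo] by blast
  have act: "ray_act \<theta> m \<alpha> j = Some (a j)" "ray_act \<theta> m' \<alpha> j = Some (b j)" if "j \<le> l" for j
  proof -
    have "j \<in> dom \<alpha>" using that dom_l by simp
    then obtain x where "\<alpha> j = Some x" by blast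
    then show "ray_act \<theta> m \<alpha> j = Some (a j)" "ray_act \<theta> m' \<alpha> j = Some (b j)"
      unfolding a_def b_def ray_act_def by simp_all
  qed
  have "dom (ray_meet (ray_act \<theta> m \<alpha>) (ray_act \<theta> m' \<alpha>)) = {..k}"
  proof (intro set_eqI iffI)
    fix i assume "i \<in> dom (ray_meet (ray_act \<theta> m \<alpha>) (ray_act \<theta> m' \<alpha>))"
    then have "ray_act \<theta> m \<alpha> i \<noteq> None" unfolding dom_ray_meet by blast
    then have "i \<le> l" using dom_l by (auto simp: ray_act_def)
    moreover have "a i = b i" using act \<open>i \<le> l\<close> \<open>i \<in> dom _\<close> by (simp add: dom_ray_meet)
    ultimately show "i \<in> {..k}" using agree by simp
  next
    fix i assume "i \<in> {..k}"
    then have "j \<le> l \<and> a j = b j" if "j \<le> i" for j using agree that \<open>k \<le> l\<close> by auto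
    then show "i \<in> dom (ray_meet (ray_act \<theta> m \<alpha>) (ray_act \<theta> m' \<alpha>))"
      using act by (simp add: dom_ray_meet)
  qed
  then have "D_chi \<theta> \<alpha> m m' = enat k" unfolding D_chi_def by (rule ray_len_atMost)
  with \<open>k \<le> l\<close> agree that show ?thesis unfolding a_def b_def by blast
qed

lemma enat_double_diff: "2 * enat l - 2 * enat k = enat (2 * l - 2 * k)"
  by (simp add: numeral_eq_enat)

lemma D_chi_tree_distance:
  assumes chi: "elliptic_Mtree V E r0 \<alpha> \<theta>" and l: "dep_tree V E r0 = enat l"
  shows "2 * enat l - 2 * D_chi \<theta> \<alpha> m m' = enat (tdist V E (\<theta> m (the (\<alpha> l))) (\<theta> m' (the (\<alpha> l))))"
proof -
  obtain k where k: "k \<le> l" "D_chi \<theta> \<alpha> m m' = enat k"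
    and agree: "\<And>i. i \<le> l \<Longrightarrow> \<theta> m (the (\<alpha> i)) = \<theta> m' (the (\<alpha> i)) \<longleftrightarrow> i \<le> k"
    using D_chi_finite_depth[OF chi l, where m = m and m' = m'] by blast
  have "tdist V E (\<theta> m (the (\<alpha> l))) (\<theta> m' (the (\<alpha> l))) = 2 * l - 2 * k"
    using root_geodesic_branch_dist[OF elliptic_MtreeD(1)[OF chi]
        translate_root_geodesic[OF chi l] translate_root_geodesic[OF chi l] k(1) agree] .
  then show ?thesis using k(2) enat_double_diff by simp
qed

lemma D_chi_eq_depth_iff:
  assumes chi: "elliptic_Mtree V E r0 \<alpha> \<theta>" and l: "dep_tree V E r0 = enat l"
  shows "D_chi \<theta> \<alpha> m m' = enat l \<longleftrightarrow> ray_act \<theta> m \<alpha> = ray_act \<theta> m' \<alpha>"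
proof -
  obtain k where k: "k \<le> l" "D_chi \<theta> \<alpha> m m' = enat k"
    and agree: "\<And>i. i \<le> l \<Longrightarrow> \<theta> m (the (\<alpha> i)) = \<theta> m' (the (\<alpha> i)) \<longleftrightarrow> i \<le> k"
    using D_chi_finite_depth[OF chi l, where m = m and m' = m'] by blast
  have dom_l: "dom \<alpha> = {..l}" by (rule finite_depth_dom[OF chi l])
  show ?thesis
  proof
    assume "D_chi \<theta> \<alpha> m m' = enat l"
    then have "k = l" using k(2) by simp
    show "ray_act \<theta> m \<alpha> = ray_act \<theta> m' \<alpha>"
    proof
      fix i show "ray_act \<theta> m \<alpha> i = ray_act \<theta> m' \<alpha> i"
        using dom_l agree[of i] \<open>k = l\<close> by (cases "\<alpha> i") (auto simp: ray_act_def)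
    qed
  next
    assume same: "ray_act \<theta> m \<alpha> = ray_act \<theta> m' \<alpha>"
    obtain x where "\<alpha> l = Some x" using dom_l by blast
    then have "\<theta> m (the (\<alpha> l)) = \<theta> m' (the (\<alpha> l))"
      using fun_cong[OF same, of l] by (simp add: ray_act_def)
    then show "D_chi \<theta> \<alpha> m m' = enat l" using agree[of l] k by simp
  qed
qed

text \<open>It vanishes
  exactly when \<open>\<alpha> m\<close> and \<open>\<alpha> m'\<close> agree everywhere, and the ultrametric inequality is the
  image of (L4) under the order-reversing map \<open>t \<mapsto> 2l - 2t\<close>.\<close>
lemma D_chi_ultrametric:
  assumes chi: "elliptic_Mtree V E r0 \<alpha> \<theta>" and l: "dep_tree V E r0 = enat l"
    and faithful: "strongly_faithful \<alpha> \<theta>"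
  shows "ultrametric (\<lambda>m m'. 2 * enat l - 2 * D_chi \<theta> \<alpha> m m')"
proof -
  let ?d = "\<lambda>m m'. 2 * enat l - 2 * D_chi \<theta> \<alpha> m m'"
  note LF = D_chi_length_function[OF chi, unfolded length_function_def]
  have zero: "?d m m' = 0 \<longleftrightarrow> m = m'" for m m'
  proof -
    obtain k where "k \<le> l" "D_chi \<theta> \<alpha> m m' = enat k"
      using D_chi_finite_depth[OF chi l, where m = m and m' = m'] by blast
    then have "?d m m' = 0 \<longleftrightarrow> D_chi \<theta> \<alpha> m m' = enat l"
      by (auto simp: enat_double_diff zero_enat_def)
    also have "\<dots> \<longleftrightarrow> m = m'"
      using D_chi_eq_depth_iff[OF chi l] faithful unfolding strongly_faithful_def by blast
    finally show ?thesis .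
  qed
  have finite: "?d m m' \<noteq> \<infinity>" for m m'
    using D_chi_finite_depth[OF chi l] enat_double_diff by (metis enat.distinct(1))
  have symmetric: "?d m m' = ?d m' m" for m m' using LF by simp
  have ultra: "?d x z \<le> max (?d x y) (?d y z)" for x y z
  proof -
    obtain a b c where abc: "D_chi \<theta> \<alpha> x y = enat a" "D_chi \<theta> \<alpha> y z = enat b"
      "D_chi \<theta> \<alpha> x z = enat c"
      using D_chi_finite_depth[OF chi l] by metis
    have "min a b \<le> c" using LF abc by (metis min_enat_simps(1) enat_ord_simps(1))
    then have "2 * l - 2 * c \<le> max (2 * l - 2 * a) (2 * l - 2 * b)" by linarith
    then show ?thesis unfolding abc enat_double_diff by simp
  qed
  show ?thesis unfolding ultrametric_def using finite zero symmetric ultra by blast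
qed

theorem proposition4p5:
  fixes V :: "'v set" and E :: "('v \<times> 'v) set" and r0 :: 'v
    and \<alpha> :: "nat \<Rightarrow> 'v option" and \<theta> :: "'m::monoid_mult \<Rightarrow> 'v \<Rightarrow> 'v"
  assumes chi: "elliptic_Mtree V E r0 \<alpha> \<theta>"
  shows "length_function (D_chi \<theta> \<alpha>) \<and>
    (\<forall>l. dep_tree V E r0 = enat l \<longrightarrow>
           (\<forall>m m'. 2 * enat l - 2 * D_chi \<theta> \<alpha> m m'
                  = enat (tdist V E (\<theta> m (the (\<alpha> l))) (\<theta> m' (the (\<alpha> l)))))) \<and>
    (\<forall>l. dep_tree V E r0 = enat l \<longrightarrow> strongly_faithful \<alpha> \<theta> \<longrightarrow>
           ultrametric (\<lambda>m m'. 2 * enat l - 2 * D_chi \<theta> \<alpha> m m'))"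
  using D_chi_length_function[OF chi] D_chi_tree_distance[OF chi] D_chi_ultrametric[OF chi]
  by blast

end
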